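(* Let $E$ be the elliptic curve $Y^2+11Y=X^3+11X^2+33X$ over $\mathbb{Q}$ and $t=Y-\frac{11}{X}$. For every point $P\in E(\mathbb{Q})$ other than the point at infinity, $(0,0)$ and $(0,-11)$ (the poles of $t$), we have $\widehat{h}(P)\le \tfrac13 h_t(P)+4.52$.
   Context: For a non-constant function $f$ on $E$ and $P\in E(\mathbb{Q})$ with $f(P)$ finite, $H_f(P)=\prod_{p\le\infty}\max(1,|f(P)|_p)$ (product over all primes and the archimedean place, standard normalized absolute values) and $h_f(P)=\log H_f(P)$. The canonical height is $\widehat{h}(P)=\frac{1}{\deg f}\lim_{n\to\infty} h_f(2^nP)/4^n$ for any even non-constant function $f$, e.g. $f=X$ with $\deg X=2$ (Silverman's normalization). *)

theory Defs
  imports Complex_Main "HOL-Library.Groups_Big_Fun" "HOL-Computational_Algebra.Primes"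
begin

text \<open>Points of E(Q) for a Weierstrass curve; None is the point at infinity.\<close>
type_synonym ept = "(rat \<times> rat) option"

definition a1 :: rat where "a1 = 0"
definition a2 :: rat where "a2 = 11"
definition a3 :: rat where "a3 = 11"
definition a4 :: rat where "a4 = 33"
definition a6 :: rat where "a6 = 0"

definition on_curve :: "ept \<Rightarrow> bool" where
  "on_curve P = (case P of None \<Rightarrow> True
     | Some (x, y) \<Rightarrow> y^2 + a1*x*y + a3*y = x^3 + a2*x^2 + a4*x + a6)"

text \<open>Group law (Silverman, Alg. III.2.3).\<close>
definition ec_add :: "ept \<Rightarrow> ept \<Rightarrow> ept" where
  "ec_add P Q = (case P of None \<Rightarrow> Q | Some (x1, y1) \<Rightarrow>
     (case Q of None \<Rightarrow> P | Some (x2, y2) \<Rightarrow>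
       (if x1 = x2 \<and> y1 + y2 + a1*x2 + a3 = 0 then None
        else (let l = (if x1 \<noteq> x2 then (y2 - y1) / (x2 - x1)
                       else (3*x1^2 + 2*a2*x1 + a4 - a1*y1) / (2*y1 + a1*x1 + a3));
                  nu = y1 - l*x1;
                  x3 = l^2 + a1*l - a2 - x1 - x2;
                  y3 = -(l + a1)*x3 - nu - a3
              in Some (x3, y3)))))"

definition ec_double :: "ept \<Rightarrow> ept" where
  "ec_double P = ec_add P P"

definition padic_val :: "nat \<Rightarrow> rat \<Rightarrow> int" where
  "padic_val p x = (case quotient_of x of (a, b) \<Rightarrow>
     int (multiplicity (int p) a) - int (multiplicity (int p) b))"

definition padic_abs :: "nat \<Rightarrow> rat \<Rightarrow> real" where
  "padic_abs p x = (if x = 0 then 0 else real p powr (- real_of_int (padic_val p x)))"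

definition Ht :: "rat \<Rightarrow> real" where
  "Ht x = max 1 \<bar>real_of_rat x\<bar> *
          Prod_any (\<lambda>p::nat. if prime p then max 1 (padic_abs p x) else 1)"

definition ht :: "rat \<Rightarrow> real" where
  "ht x = ln (Ht x)"

text \<open>h_X(P); X has its pole at infinity, convention h_X(O) = 0.\<close>
definition hX :: "ept \<Rightarrow> real" where
  "hX P = (case P of None \<Rightarrow> 0 | Some (x, y) \<Rightarrow> ht x)"

text \<open>h_t(P) for t = Y - 11/X (only meaningful when X(P) \<noteq> 0).\<close>
definition t_fun :: "ept \<Rightarrow> rat" where
  "t_fun P = (case P of None \<Rightarrow> 0 | Some (x, y) \<Rightarrow> y - 11 / x)"

definition h_t :: "ept \<Rightarrow> real" where
  "h_t P = ht (t_fun P)"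

text \<open>Canonical height (Silverman normalization), f = X, deg X = 2.\<close>
definition canon_height :: "ept \<Rightarrow> real" where
  "canon_height P = (1 / 2) * lim (\<lambda>n. hX ((ec_double ^^ n) P) / 4 ^ n)"

end

theory Submission
  imports Defs
begin

(* For q = n/d in lowest terms the product over the finite places
      in the definition of Ht is exactly d, so Ht q = max 1 |q| * d.  Consequently
      q*M = N with integers M, N gives Ht q <= max |N| |M|, and a lower bound whenever a
      divisor of M is coprime to N.
   2. Duplication.  E(Q) has no 2-torsion, and x(2P) = phi(x)/psi(x) with integral quartic
      phi and cubic psi; clearing denominators gives H(x(2P)) <= 551 * H(x(P))^4, i.e.
      h_X(2P) <= 4 h_X(P) + ln 551.  Tate's telescoping argument (proved for arbitrary
      sequences with h(n+1) <= d h(n) + C) turns this into hhat(P) <= (h_X(P) + ln 551/3)/2.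
   3. Comparison of X with t.  If x = a/e, y = b/f in lowest terms then e^3 = f^2, the
      denominator of t is a multiple of f, and an archimedean estimate on the real curve
      gives H(x)^3 <= 2^12 * H(t)^2.
   Combining 2 and 3 yields hhat(P) <= h_t(P)/3 + (22 ln 2)/6 <= h_t(P)/3 + 4.52. *)

section \<open>Heights of rational numbers\<close>

lemma Prod_any_prime_powers:
  fixes m :: int assumes "m > 0"
  shows "Prod_any (\<lambda>p::nat. if prime p then real p ^ multiplicity (int p) m else 1) = real_of_int m"
proof -
  let ?g = "\<lambda>p::nat. if prime p then real p ^ multiplicity (int p) m else 1"
  let ?A = "nat ` prime_factors m"
  have support: "{p. ?g p \<noteq> 1} \<subseteq> ?A"
  proof
    fix p assume "p \<in> {p. ?g p \<noteq> 1}"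
    then have "prime p" and "multiplicity (int p) m > 0"
      by (auto split: if_splits intro: gr0I)
    then have "int p \<in> prime_factors m"
      by (simp add: prime_factors_multiplicity)
    then show "p \<in> ?A" by (metis image_eqI nat_int)
  qed
  have "Prod_any ?g = prod ?g ?A"
    using Prod_any.expand_superset[OF _ support] by simp
  also have "\<dots> = prod (?g \<circ> nat) (prime_factors m)"
    by (rule prod.reindex) (auto intro!: inj_onI simp: in_prime_factors_iff dest!: prime_gt_0_int)
  also have "\<dots> = prod (\<lambda>p. real_of_int (p ^ multiplicity p m)) (prime_factors m)"
  proof (rule prod.cong)
    fix p assume "p \<in> prime_factors m"
    then have "prime p" "p > 0" by (auto simp: in_prime_factors_iff prime_gt_0_int)
    then show "(?g \<circ> nat) p = real_of_int (p ^ multiplicity p m)"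
      by (simp add: prime_nat_iff_prime)
  qed simp
  also have "\<dots> = real_of_int (\<Prod>p\<in>prime_factors m. p ^ multiplicity p m)" by simp
  also have "\<dots> = real_of_int m" using assms by (simp add: prod_prime_factors)
  finally show ?thesis .
qed

lemma max_one_padic_abs:
  assumes qo: "quotient_of q = (n, d)" and pp: "prime p"
  shows "max 1 (padic_abs p q) = real p ^ multiplicity (int p) d"
proof (cases "q = 0")
  case True
  then have "d = 1" using qo by simp
  then show ?thesis using True by (simp add: padic_abs_def)
next
  case False
  have cop: "coprime n d" using quotient_of_coprime[OF qo] .
  have ip: "prime (int p)" using pp by (simp add: prime_nat_int_transfer)
  have p1: "real p > 1" using prime_gt_1_nat[OF pp] by simp
  have pv: "padic_val p q = int (multiplicity (int p) n) - int (multiplicity (int p) d)"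
    by (simp add: padic_val_def qo)
  show ?thesis
  proof (cases "int p dvd d")
    case True
    then have "\<not> int p dvd n" using cop ip
      by (metis coprime_common_divisor not_prime_unit coprime_commute)
    then have "padic_abs p q = real p powr real (multiplicity (int p) d)"
      using False by (simp add: padic_abs_def pv not_dvd_imp_multiplicity_0)
    then show ?thesis using p1 by (simp add: powr_realpow max_def)
  next
    case not_dvd: False
    then have d0: "multiplicity (int p) d = 0" by (simp add: not_dvd_imp_multiplicity_0)
    have "1 \<le> real p powr real (multiplicity (int p) n)"
      using p1 by (intro ge_one_powr_ge_zero) auto
    then have "padic_abs p q \<le> 1"
      using False by (simp add: padic_abs_def pv d0 powr_minus inverse_le_1_iff)
    then show ?thesis using d0 by simp
  qed
qed

lemma Ht_quotient_of:
  assumes qo: "quotient_of q = (n, d)"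
  shows "Ht q = max 1 \<bar>real_of_rat q\<bar> * real_of_int d"
proof -
  have "(\<lambda>p::nat. if prime p then max 1 (padic_abs p q) else 1)
      = (\<lambda>p::nat. if prime p then real p ^ multiplicity (int p) d else 1)"
    using max_one_padic_abs[OF qo] by auto
  then show ?thesis
    using Prod_any_prime_powers[of d] quotient_of_denom_pos[OF qo] by (simp only: Ht_def)
qed

lemma Ht_ge_1: "Ht q \<ge> 1"
proof -
  obtain n d where qo: "quotient_of q = (n, d)" by (cases "quotient_of q")
  have "real_of_int d \<ge> 1" using quotient_of_denom_pos[OF qo] by simp
  moreover have "max 1 \<bar>real_of_rat q\<bar> \<ge> 1" by simp
  ultimately show ?thesis unfolding Ht_quotient_of[OF qo] by (metis mult_mono' mult_1 zero_le_one)
qed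

lemma quotient_of_cross_mult:
  assumes qo: "quotient_of q = (n, d)" and M: "q * of_int M = of_int N"
  shows "n * M = N * d"
proof -
  have "q = of_int n / of_int d" using quotient_of_div[OF qo] .
  with M have "of_int n * of_int M = (of_int N * of_int d :: rat)"
    using quotient_of_denom_pos[OF qo] by (simp add: field_simps)
  then show ?thesis by (metis of_int_eq_iff of_int_mult)
qed

lemma denominator_dvd_mult:
  assumes qo: "quotient_of q = (n, d)" and M: "q * of_int M = of_int N"
  shows "d dvd M"
proof -
  have "d dvd n * M" using quotient_of_cross_mult[OF qo M] by simp
  then show ?thesis using quotient_of_coprime[OF qo]
    by (metis coprime_commute coprime_dvd_mult_right_iff)
qed

lemma Ht_le_fraction:
  assumes M: "q * of_int M = of_int N" and M0: "M \<noteq> 0"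
  shows "Ht q \<le> max \<bar>real_of_int N\<bar> \<bar>real_of_int M\<bar>"
proof -
  obtain n d where qo: "quotient_of q = (n, d)" by (cases "quotient_of q")
  have "d dvd M" using denominator_dvd_mult[OF qo M] .
  then have "d \<le> \<bar>M\<bar>" using dvd_imp_le_int[OF M0] quotient_of_denom_pos[OF qo] by fastforce
  then have dle: "real_of_int d \<le> \<bar>real_of_int M\<bar>" by linarith
  have "real_of_rat q * real_of_int M = real_of_int N"
    using arg_cong[OF M, of real_of_rat] by (simp add: of_rat_mult)
  then have qM: "\<bar>real_of_rat q\<bar> * \<bar>real_of_int M\<bar> = \<bar>real_of_int N\<bar>"
    by (metis abs_mult)
  have "Ht q = max 1 \<bar>real_of_rat q\<bar> * real_of_int d" using Ht_quotient_of[OF qo] .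
  also have "\<dots> \<le> max 1 \<bar>real_of_rat q\<bar> * \<bar>real_of_int M\<bar>"
    using dle by (intro mult_left_mono) auto
  also have "\<dots> = max \<bar>real_of_int M\<bar> (\<bar>real_of_rat q\<bar> * \<bar>real_of_int M\<bar>)"
    by (simp add: max_mult_distrib_right)
  also note qM
  finally show ?thesis by (simp add: max.commute)
qed

lemma Ht_ge_fraction:
  assumes M: "q * of_int M = of_int N" and cop: "coprime N f" and fM: "f dvd M" and fpos: "f > 0"
  shows "max 1 \<bar>real_of_rat q\<bar> * real_of_int f \<le> Ht q"
proof -
  obtain n d where qo: "quotient_of q = (n, d)" by (cases "quotient_of q")
  have "f dvd n * M" using fM by simp
  then have "f dvd N * d" using quotient_of_cross_mult[OF qo M] by simp
  then have "f dvd d" using cop by (metis coprime_commute coprime_dvd_mult_right_iff)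
  then have "real_of_int f \<le> real_of_int d"
    using quotient_of_denom_pos[OF qo] by (simp add: zdvd_imp_le)
  then show ?thesis unfolding Ht_quotient_of[OF qo] by (intro mult_left_mono) auto
qed

section \<open>Arithmetic of the curve\<close>

lemma on_curve_Some: "on_curve (Some (x, y)) \<longleftrightarrow> y^2 + 11*y = x^3 + 11*x^2 + 33*x"
  by (simp add: on_curve_def a1_def a2_def a3_def a4_def a6_def)

lemma coprime_add_multiple: "coprime (e::int) u \<Longrightarrow> coprime e (u + e * k)"
  by (metis coprime_iff_gcd_eq_1 gcd_add_mult add.commute mult.commute)

text \<open>For a rational point with x = a/e and y = b/f in lowest terms, e^3 = f^2:
  comparing e^3(b^2 + 11bf) = f^2(a^3 + 11a^2e + 33ae^2), each side's cofactor is coprime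
  to the other side's denominator power.\<close>
lemma curve_denominators:
  assumes C: "y^2 + 11*y = x^3 + 11*x^2 + 33*(x::rat)"
    and qx: "quotient_of x = (a, e)" and qy: "quotient_of y = (b, f)"
  shows "e^3 = f^2"
proof -
  have epos: "e > 0" using quotient_of_denom_pos[OF qx] .
  have fpos: "f > 0" using quotient_of_denom_pos[OF qy] .
  have x: "x = of_int a / of_int e" using quotient_of_div[OF qx] .
  have y: "y = of_int b / of_int f" using quotient_of_div[OF qy] .
  have "(of_int (e^3 * (b^2 + 11*b*f)) :: rat) = of_int (f^2 * (a^3 + 11*a^2*e + 33*a*e^2))"
    using C epos fpos unfolding x y by (simp add: field_simps power2_eq_square power3_eq_cube)
  then have E: "e^3 * (b^2 + 11*b*f) = f^2 * (a^3 + 11*a^2*e + 33*a*e^2)"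
    by (simp only: of_int_eq_iff)
  have "coprime e (a^3 + e * (11*a^2 + 33*a*e))"
    using quotient_of_coprime[OF qx] by (intro coprime_add_multiple) (simp add: coprime_commute)
  then have cx: "coprime (e^3) (a^3 + 11*a^2*e + 33*a*e^2)"
    by (simp add: algebra_simps power2_eq_square)
  have "coprime f (b^2 + f * (11*b))"
    using quotient_of_coprime[OF qy] by (intro coprime_add_multiple) (simp add: coprime_commute)
  then have cy: "coprime (f^2) (b^2 + 11*b*f)" by (simp add: algebra_simps)
  have "e^3 dvd f^2" using E cx by (metis dvd_triv_left coprime_dvd_mult_left_iff)
  moreover have "f^2 dvd e^3" using E cy by (metis dvd_triv_left coprime_dvd_mult_left_iff)
  ultimately show ?thesis using epos fpos by (simp add: zdvd_antisym_nonneg)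
qed

text \<open>E(Q) has no point of order 2: 2y + 11 = 0 would force the denominator of y to be
  1 or 2, which is incompatible with e^3 = f^2 and with y = -11/2 respectively.\<close>
lemma no_rational_2_torsion:
  assumes C: "y^2 + 11*y = x^3 + 11*x^2 + 33*(x::rat)"
  shows "2*y + 11 \<noteq> 0"
proof
  assume h: "2*y + 11 = 0"
  obtain a e where qx: "quotient_of x = (a, e)" by (cases "quotient_of x")
  obtain b f where qy: "quotient_of y = (b, f)" by (cases "quotient_of y")
  have ef: "e^3 = f^2" using curve_denominators[OF C qx qy] .
  have epos: "e > 0" using quotient_of_denom_pos[OF qx] .
  have fpos: "f > 0" using quotient_of_denom_pos[OF qy] .
  have "y * of_int 2 = of_int (-11)" using h by (simp add: algebra_simps)
  then have "f dvd 2" using denominator_dvd_mult[OF qy] by blast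
  then have "f = 1 \<or> f = 2" using fpos zdvd_imp_le[of f 2] by auto
  then show False
  proof
    assume "f = 1"
    then have "(of_int (2 * b + 11) :: rat) = 0" using h quotient_of_div[OF qy] by simp
    then have "2 * b + 11 = 0" by (simp only: of_int_eq_0_iff)
    then show False by presburger
  next
    assume "f = 2"
    then have "e^3 = 4" using ef by simp
    moreover have "e \<ge> 2 \<Longrightarrow> e^3 \<ge> 2^3" by (intro power_mono) auto
    ultimately show False using epos by (cases "e = 1") auto
  qed
qed

text \<open>Numerator and denominator of the duplication formula: x(2P) = phi(x) / psi(x), where
  psi(x) = (2y + 11)^2 on the curve.\<close>
definition psi :: "rat \<Rightarrow> rat" where "psi x = 4*x^3 + 44*x^2 + 132*x + 121"
definition phi :: "rat \<Rightarrow> rat" where "phi x = x^4 - 66*x^2 - 242*x - 242"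

lemma doubling_stays_on_curve:
  fixes x y l :: rat
  assumes "y^2 + 11*y = x^3 + 11*x^2 + 33*x"
    and "l * (2*y + 11) = 3*x^2 + 22*x + 33"
  shows "(-l*(l^2 - 11 - 2*x) - (y - l*x) - 11)^2 + 11*(-l*(l^2 - 11 - 2*x) - (y - l*x) - 11)
       = (l^2 - 11 - 2*x)^3 + 11*(l^2 - 11 - 2*x)^2 + 33*(l^2 - 11 - 2*x)"
  using assms by algebra

lemma ec_double_formula:
  assumes C: "y^2 + 11*y = x^3 + 11*x^2 + 33*(x::rat)"
  shows "\<exists>x' y'. ec_double (Some (x, y)) = Some (x', y') \<and>
           y'^2 + 11*y' = x'^3 + 11*x'^2 + 33*x' \<and> psi x \<noteq> 0 \<and> x' * psi x = phi x"
proof -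
  have w: "2*y + 11 \<noteq> 0" using no_rational_2_torsion[OF C] .
  define l where "l = (3*x^2 + 22*x + 33) / (2*y + 11)"
  have L: "l * (2*y + 11) = 3*x^2 + 22*x + 33" using w by (simp add: l_def)
  define x' where "x' = l^2 - 11 - 2*x"
  define y' where "y' = -l*x' - (y - l*x) - 11"
  have E: "ec_double (Some (x, y)) = Some (x', y')"
  proof -
    have nc: "\<not> (x = x \<and> y + y + a1*x + a3 = 0)" using w by (simp add: a1_def a3_def)
    show ?thesis
      unfolding ec_double_def ec_add_def option.case prod.case if_not_P[OF nc] Let_def
      by (simp add: x'_def y'_def l_def a1_def a2_def a3_def a4_def)
  qed
  have CC: "y'^2 + 11*y' = x'^3 + 11*x'^2 + 33*x'"
    unfolding y'_def x'_def by (rule doubling_stays_on_curve[OF C L])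
  have ps: "psi x = (2*y+11)^2" using C by (simp add: psi_def power2_eq_square algebra_simps)
  have "x' * psi x = l^2 * psi x - (11 + 2*x) * psi x"
    by (simp add: x'_def algebra_simps)
  also have "l^2 * psi x = (l * (2*y+11))^2" by (simp add: ps power_mult_distrib)
  also have "(l * (2*y+11))^2 - (11 + 2*x) * psi x = phi x" unfolding L psi_def phi_def by algebra
  finally show ?thesis using E CC ps w by auto
qed

lemma ec_double_iter_on_curve:
  assumes C: "y^2 + 11*y = x^3 + 11*x^2 + 33*(x::rat)"
  shows "\<exists>a b. (ec_double ^^ n) (Some (x, y)) = Some (a, b) \<and> b^2 + 11*b = a^3 + 11*a^2 + 33*a"
proof (induction n)
  case 0 then show ?case using C by auto
next
  case (Suc n)
  then obtain a b where "(ec_double ^^ n) (Some (x, y)) = Some (a, b)"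
      and "b^2 + 11*b = a^3 + 11*a^2 + 33*a" by blast
  then show ?case using ec_double_formula[of b a] by auto
qed

section \<open>The duplication estimate and the canonical height\<close>

lemma abs_monomial_le:
  fixes p q m :: real
  assumes "\<bar>p\<bar> \<le> m" "\<bar>q\<bar> \<le> m"
  shows "\<bar>p^i * q^j\<bar> \<le> m^(i+j)"
proof -
  have "\<bar>p^i * q^j\<bar> = \<bar>p\<bar>^i * \<bar>q\<bar>^j" by (simp add: abs_mult power_abs)
  also have "\<dots> \<le> m^i * m^j" using assms by (intro mult_mono power_mono) auto
  finally show ?thesis by (simp add: power_add)
qed

text \<open>With x = p/q, the homogenised forms Phi = q^4 phi(x), Psi = q^4 psi(x) have absolute
  coefficient sums 1+66+242+242 = 551 and 4+44+132+121 = 301, so x(2P) = Phi/Psi has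
  height at most 551 * max(|p|, q)^4 = 551 * H(x)^4.\<close>
lemma Ht_duplication:
  assumes xx: "x' * psi x = phi x" and ps0: "psi x \<noteq> 0"
  shows "Ht x' \<le> 551 * Ht x ^ 4"
proof -
  obtain p q where qx: "quotient_of x = (p, q)" by (cases "quotient_of x")
  have qpos: "q > 0" using quotient_of_denom_pos[OF qx] .
  have xe: "x = of_int p / of_int q" using quotient_of_div[OF qx] .
  define Phi where "Phi = p^4 - 66*p^2*q^2 - 242*p*q^3 - 242*q^4"
  define Psi where "Psi = 4*p^3*q + 44*p^2*q^2 + 132*p*q^3 + 121*q^4"
  have Psi_eq: "of_int Psi = (of_int q)^4 * psi x"
    using qpos unfolding Psi_def psi_def xe
    by (simp add: field_simps power2_eq_square power3_eq_cube power4_eq_xxxx)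
  have Phi_eq: "of_int Phi = (of_int q)^4 * phi x"
    using qpos unfolding Phi_def phi_def xe
    by (simp add: field_simps power2_eq_square power3_eq_cube power4_eq_xxxx)
  have "x' * of_int Psi = of_int Phi" unfolding Psi_eq Phi_eq by (simp flip: xx)
  moreover have "Psi \<noteq> 0" using Psi_eq ps0 qpos by auto
  ultimately have H: "Ht x' \<le> max \<bar>real_of_int Phi\<bar> \<bar>real_of_int Psi\<bar>" by (rule Ht_le_fraction)
  define m where "m = max \<bar>real_of_int p\<bar> (real_of_int q)"
  have Hx: "Ht x = m"
  proof -
    have "\<bar>real_of_rat x\<bar> * real_of_int q = \<bar>real_of_int p\<bar>"
      using qpos unfolding xe by (simp add: of_rat_divide abs_divide)
    then show ?thesis
      using qpos by (simp add: Ht_quotient_of[OF qx] max_mult_distrib_right m_def max.commute)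
  qed
  let ?P = "real_of_int p" and ?Q = "real_of_int q"
  have "\<bar>?P\<bar> \<le> m" and "\<bar>?Q\<bar> \<le> m" using qpos by (auto simp: m_def)
  note mono = abs_monomial_le[OF this]
  have "\<bar>real_of_int Phi\<bar> \<le> 551 * m^4"
  proof -
    have m40: "\<bar>?P^4 * ?Q^0\<bar> \<le> m^4" and m22: "\<bar>?P^2 * ?Q^2\<bar> \<le> m^4"
      and m13: "\<bar>?P^1 * ?Q^3\<bar> \<le> m^4" and m04: "\<bar>?P^0 * ?Q^4\<bar> \<le> m^4"
      using mono[of 4 0] mono[of 2 2] mono[of 1 3] mono[of 0 4] by simp_all
    have "real_of_int Phi = ?P^4 * ?Q^0 - 66*(?P^2 * ?Q^2) - 242*(?P^1*?Q^3) - 242*(?P^0*?Q^4)"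
      by (simp add: Phi_def)
    then show ?thesis using m40 m22 m13 m04 by linarith
  qed
  moreover have "\<bar>real_of_int Psi\<bar> \<le> 551 * m^4"
  proof -
    have m31: "\<bar>?P^3 * ?Q^1\<bar> \<le> m^4" and m22: "\<bar>?P^2 * ?Q^2\<bar> \<le> m^4"
      and m13: "\<bar>?P^1 * ?Q^3\<bar> \<le> m^4" and m04: "\<bar>?P^0 * ?Q^4\<bar> \<le> m^4"
      using mono[of 3 1] mono[of 2 2] mono[of 1 3] mono[of 0 4] by simp_all
    have "real_of_int Psi = 4*(?P^3 * ?Q^1) + 44*(?P^2 * ?Q^2) + 132*(?P^1*?Q^3) + 121*(?P^0*?Q^4)"
      by (simp add: Psi_def)
    then show ?thesis using m31 m22 m13 m04 by linarith
  qed
  ultimately show ?thesis using H Hx by simp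
qed

lemma hX_nonneg: "hX P \<ge> 0"
  using Ht_ge_1 by (cases P) (auto simp: hX_def ht_def)

lemma hX_double_le:
  assumes C: "y^2 + 11*y = x^3 + 11*x^2 + 33*(x::rat)"
  shows "hX (ec_double (Some (x, y))) \<le> 4 * hX (Some (x, y)) + ln 551"
proof -
  obtain x' y' where d: "ec_double (Some (x, y)) = Some (x', y')" "psi x \<noteq> 0" "x' * psi x = phi x"
    using ec_double_formula[OF C] by blast
  have pos: "Ht x' > 0" "Ht x > 0" using Ht_ge_1[of x'] Ht_ge_1[of x] by auto
  have "ln (Ht x') \<le> ln (551 * Ht x ^ 4)" using Ht_duplication[OF d(3,2)] pos by simp
  also have "\<dots> = ln 551 + 4 * ln (Ht x)" using pos by (simp add: ln_mult ln_realpow)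
  finally show ?thesis using d(1) by (simp add: hX_def ht_def)
qed

text \<open>The sequence (h(n) + C/(d-1))/d^n decreases,
  which also yields the existence of the limit.\<close>
lemma tate_telescoping_bound:
  fixes h :: "nat \<Rightarrow> real" and d C :: real
  assumes d1: "d > 1" and nonneg: "\<And>n. h n \<ge> 0"
    and step: "\<And>n. h (Suc n) \<le> d * h n + C"
  shows "lim (\<lambda>n. h n / d ^ n) \<le> h 0 + C / (d - 1)"
proof -
  define c where "c = C / (d - 1)"
  define a where "a n = (h n + c) / d ^ n" for n
  have dpow: "d ^ n \<ge> 1" for n using d1 by (simp add: one_le_power)
  have "decseq a"
  proof (rule decseq_SucI)
    fix n
    have "d * c = C + c" using d1 by (simp add: c_def field_simps)
    then have "h (Suc n) + c \<le> d * (h n + c)"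
      using step[of n] by (simp add: distrib_left)
    then have "(h (Suc n) + c) / d ^ Suc n \<le> d * (h n + c) / d ^ Suc n"
      using d1 by (intro divide_right_mono) auto
    then show "a (Suc n) \<le> a n" using d1 by (simp add: a_def)
  qed
  moreover have "\<forall>n. min 0 c \<le> a n"
  proof
    fix n
    have "c / d ^ n \<le> a n" using nonneg[of n] dpow[of n]
      by (simp add: a_def divide_right_mono)
    moreover have "min 0 c \<le> c / d ^ n" using dpow[of n]
      by (cases "c \<ge> 0") (auto simp: le_divide_eq mult_le_cancel_left1)
    ultimately show "min 0 c \<le> a n" by linarith
  qed
  ultimately obtain L where L: "a \<longlonglongrightarrow> L" "\<forall>n. L \<le> a n"
    using decseq_convergent by blast
  have "(\<lambda>n. a n - c / d ^ n) \<longlonglongrightarrow> L - 0"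
    using L(1) LIMSEQ_divide_realpow_zero[OF d1] by (intro tendsto_intros)
  then have "(\<lambda>n. h n / d ^ n) \<longlonglongrightarrow> L" by (simp add: a_def add_divide_distrib)
  then have "lim (\<lambda>n. h n / d ^ n) = L" by (rule limI)
  also have "\<dots> \<le> a 0" using L(2) by blast
  finally show ?thesis by (simp add: a_def c_def)
qed

lemma canon_height_le_hX:
  assumes C: "y^2 + 11*y = x^3 + 11*x^2 + 33*(x::rat)"
  shows "canon_height (Some (x, y)) \<le> (ht x + ln 551 / 3) / 2"
proof -
  define h where "h n = hX ((ec_double ^^ n) (Some (x, y)))" for n
  have "h (Suc n) \<le> 4 * h n + ln 551" for n
  proof -
    obtain u v where "(ec_double ^^ n) (Some (x, y)) = Some (u, v)"
        and "v^2 + 11*v = u^3 + 11*u^2 + 33*u"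
      using ec_double_iter_on_curve[OF C] by blast
    then show ?thesis using hX_double_le by (simp add: h_def)
  qed
  then have "lim (\<lambda>n. h n / 4 ^ n) \<le> h 0 + ln 551 / (4 - 1)"
    by (intro tate_telescoping_bound) (auto simp: h_def hX_nonneg)
  then show ?thesis by (simp add: canon_height_def h_def hX_def)
qed

section \<open>Comparison of the heights of X and t = Y - 11/X\<close>

text \<open>On the real curve x \<ge> -16 holds with room to spare: for x < -16 the right-hand side
  (y + 11/2)^2 = x^3 + 11x^2 + 33x + 121/4 would be negative.\<close>
lemma real_curve_x_lower_bound:
  fixes x y :: real
  assumes sq: "(y + 11/2)^2 = x^3 + 11*x^2 + 33*x + 121/4"
  shows "x \<ge> -16"
proof (rule ccontr)
  assume "\<not> x \<ge> -16"
  then have xn: "x < -16" by simp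
  then have "x * (x + 11) > 0" by (simp add: mult_neg_neg)
  then have w: "x^2 + 11*x + 33 > 33" by (simp add: power2_eq_square algebra_simps)
  have "x * (x^2 + 11*x + 33) < -16 * (x^2 + 11*x + 33)"
    using xn w by (intro mult_strict_right_mono) auto
  also have "\<dots> < -16 * 33" using w by simp
  finally have "x^3 + 11*x^2 + 33*x + 121/4 < 0"
    by (simp add: power2_eq_square power3_eq_cube algebra_simps)
  with sq zero_le_power2[of "y + 11/2"] show False by linarith
qed

text \<open>Archimedean comparison: max(1,|x|)^3 \<le> 2^12 max(1,|t|)^2.  For x \<le> 16 this is trivial;
  for x > 16 we have |y + 11/2| \<ge> 64 and |t| \<ge> |y + 11/2| - 11/2 - 1 \<ge> |y + 11/2|/2,
  while x^3 \<le> (y + 11/2)^2.\<close>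
lemma real_curve_x_t_bound:
  fixes x y :: real
  assumes C: "y^2 + 11*y = x^3 + 11*x^2 + 33*x" and x0: "x \<noteq> 0"
  shows "(max 1 \<bar>x\<bar>)^3 \<le> 4096 * (max 1 \<bar>y - 11/x\<bar>)^2"
proof -
  let ?t = "y - 11/x"
  have m1: "1 \<le> (max 1 \<bar>?t\<bar>)^2" by (simp add: one_le_power)
  have sq: "(y + 11/2)^2 = x^3 + 11*x^2 + 33*x + 121/4"
    using C by (simp add: power2_eq_square algebra_simps)
  show ?thesis
  proof (cases "\<bar>x\<bar> \<le> 16")
    case True
    then have "(max 1 \<bar>x\<bar>)^3 \<le> 16^3" by (intro power_mono) auto
    then have "(max 1 \<bar>x\<bar>)^3 \<le> 4096" by simp
    then show ?thesis using m1 by linarith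
  next
    case False
    then have xpos: "x > 16" using real_curve_x_lower_bound[OF sq] by linarith
    define u where "u = \<bar>y + 11/2\<bar>"
    have u2: "u^2 = x^3 + 11*x^2 + 33*x + 121/4" using sq by (simp add: u_def)
    then have x3u: "x^3 \<le> u^2" using xpos by (simp add: power2_eq_square)
    have "x^3 \<ge> 16^3" using xpos by (intro power_mono) auto
    then have "u \<ge> 64" using x3u u_def power_strict_mono[of u 64 2] by force
    moreover have "\<bar>11/x\<bar> \<le> 1" using xpos by simp
    moreover have "\<bar>?t\<bar> \<ge> u - 11/2 - \<bar>11/x\<bar>" unfolding u_def by linarith
    ultimately have "\<bar>?t\<bar> \<ge> u / 2" by linarith
    then have "(u/2)^2 \<le> \<bar>?t\<bar>^2" using \<open>u \<ge> 64\<close> by (intro power_mono) auto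
    then have "x^3 \<le> 4 * \<bar>?t\<bar>^2" using x3u by (simp add: power_divide)
    also have "\<dots> \<le> 4096 * (max 1 \<bar>?t\<bar>)^2" by (intro mult_mono power_mono) auto
    finally show ?thesis using xpos by simp
  qed
qed

text \<open>The global comparison H(x)^3 \<le> 2^12 H(t)^2: with x = a/e, y = b/f in lowest terms
  and e^3 = f^2, t = (ab - 11ef)/(af) whose denominator keeps the factor f, so the
  finite places contribute e^3 = f^2 on both sides and the archimedean bound finishes.\<close>
lemma Ht_x_cube_le_Ht_t_square:
  assumes C: "y^2 + 11*y = x^3 + 11*x^2 + 33*(x::rat)" and x0: "x \<noteq> 0"
  shows "Ht x ^ 3 \<le> 4096 * Ht (y - 11/x) ^ 2"
proof -
  obtain a e where qx: "quotient_of x = (a, e)" by (cases "quotient_of x")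
  obtain b f where qy: "quotient_of y = (b, f)" by (cases "quotient_of y")
  have ef: "e^3 = f^2" using curve_denominators[OF C qx qy] .
  have epos: "e > 0" using quotient_of_denom_pos[OF qx] .
  have fpos: "f > 0" using quotient_of_denom_pos[OF qy] .
  have xe: "x = of_int a / of_int e" using quotient_of_div[OF qx] .
  have ye: "y = of_int b / of_int f" using quotient_of_div[OF qy] .
  have "coprime a (f^2)" using quotient_of_coprime[OF qx] ef by (metis coprime_power_right_iff)
  then have "coprime f (a*b)" using quotient_of_coprime[OF qy] by (simp add: coprime_commute)
  then have "coprime f (a*b + f*(-11*e))" by (rule coprime_add_multiple)
  then have cN: "coprime (a*b - 11*e*f) f" by (simp add: algebra_simps coprime_commute)
  have tM: "(y - 11/x) * of_int (a*f) = of_int (a*b - 11*e*f)"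
    using x0 fpos epos unfolding xe ye by (simp add: field_simps)
  have low: "max 1 \<bar>real_of_rat (y - 11/x)\<bar> * real_of_int f \<le> Ht (y - 11/x)"
    by (rule Ht_ge_fraction[OF tM cN _ fpos]) simp
  have Cr: "(real_of_rat y)^2 + 11*real_of_rat y
          = (real_of_rat x)^3 + 11*(real_of_rat x)^2 + 33*real_of_rat x"
    using arg_cong[OF C, of real_of_rat] by (simp add: of_rat_add of_rat_mult of_rat_power)
  have ar: "(max 1 \<bar>real_of_rat x\<bar>)^3 \<le> 4096 * (max 1 \<bar>real_of_rat (y - 11/x)\<bar>)^2"
    using real_curve_x_t_bound[OF Cr] x0 by (simp add: of_rat_diff of_rat_divide)
  have efr: "(real_of_int e)^3 = (real_of_int f)^2" using arg_cong[OF ef, of real_of_int] by simp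
  have "Ht x ^ 3 = (max 1 \<bar>real_of_rat x\<bar>)^3 * (real_of_int f)^2"
    unfolding Ht_quotient_of[OF qx] by (simp add: power_mult_distrib efr)
  also have "\<dots> \<le> 4096 * (max 1 \<bar>real_of_rat (y - 11/x)\<bar>)^2 * (real_of_int f)^2"
    using ar by (intro mult_right_mono) auto
  also have "\<dots> = 4096 * (max 1 \<bar>real_of_rat (y - 11/x)\<bar> * real_of_int f)^2"
    by (simp add: power_mult_distrib)
  also have "\<dots> \<le> 4096 * Ht (y - 11/x) ^ 2"
    using low fpos by (intro mult_left_mono power_mono) auto
  finally show ?thesis .
qed

lemma ht_x_le_ht_t:
  assumes C: "y^2 + 11*y = x^3 + 11*x^2 + 33*(x::rat)" and x0: "x \<noteq> 0"
  shows "3 * ht x \<le> 2 * ht (y - 11/x) + 12 * ln 2"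
proof -
  have pos: "Ht x > 0" "Ht (y - 11/x) > 0" using Ht_ge_1 by (auto intro: less_le_trans[OF zero_less_one])
  have ln4096: "ln (4096::real) = 12 * ln 2" using ln_realpow[of "2::real" 12] by simp
  have "3 * ht x = ln (Ht x ^ 3)" using pos by (simp add: ht_def ln_realpow)
  also have "\<dots> \<le> ln (4096 * Ht (y - 11/x) ^ 2)"
    using Ht_x_cube_le_Ht_t_square[OF C x0] pos by simp
  also have "\<dots> = 12 * ln 2 + 2 * ht (y - 11/x)"
    using pos by (simp add: ht_def ln_mult ln_realpow ln4096)
  finally show ?thesis by simp
qed

theorem lemma2p2:
  fixes P :: ept
  assumes "on_curve P"
    and "P \<noteq> None"
    and "P \<noteq> Some (0, 0)"
    and "P \<noteq> Some (0, -11)"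
  shows "canon_height P \<le> (1/3) * h_t P + 4.52"
proof -
  obtain x y where P: "P = Some (x, y)" using assms(2) by auto
  have C: "y^2 + 11*y = x^3 + 11*x^2 + 33*x" using assms(1) P on_curve_Some by simp
  have x0: "x \<noteq> 0"
  proof
    assume "x = 0"
    then have "y * (y + 11) = 0" using C by (simp add: power2_eq_square algebra_simps)
    then show False using assms(3,4) P \<open>x = 0\<close> by auto
  qed
  have "ln (551::real) \<le> ln 1024" by simp
  moreover have "ln (1024::real) = 10 * ln 2" using ln_realpow[of "2::real" 10] by simp
  ultimately have ln551: "ln (551::real) \<le> 10 * ln 2" by linarith
  have "canon_height P \<le> (ht x + ln 551 / 3) / 2" using canon_height_le_hX[OF C] P by simp
  moreover have "3 * ht x \<le> 2 * h_t P + 12 * ln 2"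
    using ht_x_le_ht_t[OF C x0] by (simp add: P h_t_def t_fun_def)
  ultimately show ?thesis using ln551 ln_2_less_1 by simp
qed

end
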